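(* Consider a GNEP with $N$ players in which player $\nu$ has constraint function $c^\nu:\mathbb{R}^n\to\mathbb{R}^{r_\nu}$ (continuously differentiable). Let $\nu$ be a given index, let $x\in\mathbb{R}^n$ with $c^\nu(x)\le0$, and assume that $c^\nu$ satisfies MFCQ$_\nu$ in $x$. Then: (a) There is a neighbourhood $U$ of $x$ such that, for every $y\in U$, the set $X_\nu(y^{-\nu})$ is nonempty. (b) Given $\varepsilon>0$, there is a neighbourhood $U$ of $x$ such that for every $y\in U$ there is a point $z^\nu\in X_\nu(y^{-\nu})$ with $\|z^\nu-y^\nu\|\le\varepsilon$.
   Context: Variables: $x=(x^1,\ldots,x^N)\in\mathbb{R}^n$, $x^\nu\in\mathbb{R}^{n_\nu}$, written $x=(x^\nu,x^{-\nu})$ where $x^{-\nu}$ collects the other blocks. $X_\nu(x^{-\nu})=\{x^\nu\in\mathbb{R}^{n_\nu}: c^\nu(x^\nu,x^{-\nu})\le 0\}$. $\nabla_{x^\nu}c_i^\nu$ denotes the partial gradient with respect to $x^\nu$. MFCQ$_\nu$ at a point $x$ with $c^\nu(x)\le0$: there is $d^\nu\in\mathbb{R}^{n_\nu}$ with $\nabla_{x^\nu}c_i^\nu(x)^Td^\nu<0$ for every $i$ with $c_i^\nu(x)=0$ (equivalently, for every $i$ with $c_i^\nu(x)\ge 0$). Norms are Euclidean. *)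

theory Defs
  imports "HOL-Analysis.Analysis"
begin

text \<open>A point x of R^n is written as the pair (x^nu, x^-nu) :: 'a \<times> 'b.
  The constraint function c^nu : R^n -> R^(r_nu) is given by its components
  c i, i < r.\<close>

definition X_nu :: "(nat \<Rightarrow> 'a \<times> 'b \<Rightarrow> real) \<Rightarrow> nat \<Rightarrow> 'b \<Rightarrow> 'a set" where
  "X_nu c r ym = {xn. \<forall>i<r. c i (xn, ym) \<le> 0}"

definition C1_constraints ::
  "(nat \<Rightarrow> ('a::real_normed_vector) \<times> ('b::real_normed_vector) \<Rightarrow> real) \<Rightarrow> (nat \<Rightarrow> 'a \<times> 'b \<Rightarrow> ('a \<times> 'b) \<Rightarrow>\<^sub>L real) \<Rightarrow> nat \<Rightarrow> bool"
  where
  "C1_constraints c c' r \<longleftrightarrow>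
     (\<forall>i<r. (\<forall>p. (c i has_derivative blinfun_apply (c' i p)) (at p)) \<and> continuous_on UNIV (c' i))"

text \<open>MFCQ_nu at x: there is d^nu with grad_{x^nu} c_i(x)^T d^nu < 0 for all active i.
  The partial gradient applied to d^nu is the full derivative applied to (d^nu, 0).\<close>
definition MFCQ_nu ::
  "(nat \<Rightarrow> ('a::real_normed_vector) \<times> ('b::real_normed_vector) \<Rightarrow> real) \<Rightarrow> (nat \<Rightarrow> 'a \<times> 'b \<Rightarrow> ('a \<times> 'b) \<Rightarrow>\<^sub>L real) \<Rightarrow> nat \<Rightarrow> 'a \<times> 'b \<Rightarrow> bool"
  where
  "MFCQ_nu c c' r x \<longleftrightarrow>
     (\<exists>d::'a. \<forall>i<r. c i x = 0 \<longrightarrow> blinfun_apply (c' i x) (d, 0) < 0)"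

end

theory Submission
  imports Defs
begin

text \<open>Moving from x in the direction (d, 0) given by MFCQ strictly decreases every active
  constraint, while the inactive ones stay negative by continuity; hence for a small step t > 0
  the point (x^nu + t d, x^-nu) is strictly feasible. Strict feasibility of
  (y^nu + t d, y^-nu) is an open condition on y, so for all y near x the point y^nu + t d
  lies in X_nu(y^-nu), at distance t |d| from y^nu.\<close>

lemma eventually_negative_along_descent_direction:
  fixes f :: "'a::real_normed_vector \<Rightarrow> real"
  assumes deriv: "(f has_derivative f') (at x)"
    and nonpos: "f x \<le> 0"
    and descent: "f x = 0 \<Longrightarrow> f' v < 0"
  shows "eventually (\<lambda>t. f (x + t *\<^sub>R v) < 0) (at_right 0)"
proof -
  define g where "g t = f (x + t *\<^sub>R v)" for t :: real
  have ray: "((\<lambda>t::real. x + t *\<^sub>R v) has_derivative (\<lambda>t. t *\<^sub>R v)) (at 0)"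
    by (auto intro!: derivative_eq_intros)
  have "(g has_derivative (\<lambda>t. f' (t *\<^sub>R v))) (at 0)"
    unfolding g_def using has_derivative_compose[OF ray, of f f'] deriv by simp
  moreover have "f' (t *\<^sub>R v) = f' v * t" for t
    using has_derivative_linear[OF deriv] by (simp add: linear_scale)
  ultimately have g_deriv: "(g has_real_derivative f' v) (at 0)"
    unfolding has_field_derivative_def by (simp only:)
  show ?thesis
  proof (cases "f x = 0")
    case True
    obtain e where "e > 0" "\<forall>h>0. h < e \<longrightarrow> g (0 + h) < g 0"
      using has_real_derivative_neg_dec_right[OF g_deriv descent[OF True]] by blast
    then show ?thesis
      unfolding eventually_at_right_field g_def using True by auto
  next
    case False
    have "(g \<longlongrightarrow> g 0) (at_right 0)"
      using DERIV_isCont[OF g_deriv] by (simp add: isCont_def filterlim_at_split)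
    moreover have "g 0 < 0" using nonpos False by (simp add: g_def)
    ultimately show ?thesis unfolding g_def by (rule order_tendstoD)
  qed
qed

lemma exists_small_strictly_feasible_step:
  fixes f :: "nat \<Rightarrow> 'a::real_normed_vector \<Rightarrow> real"
  assumes "\<delta> > 0"
    and deriv: "\<And>i. i < r \<Longrightarrow> (f i has_derivative f' i) (at x)"
    and nonpos: "\<And>i. i < r \<Longrightarrow> f i x \<le> 0"
    and descent: "\<And>i. i < r \<Longrightarrow> f i x = 0 \<Longrightarrow> f' i v < 0"
  obtains t where "0 < t" "t < \<delta>" "\<forall>i<r. f i (x + t *\<^sub>R v) < 0"
proof -
  have "eventually (\<lambda>t. \<forall>i\<in>{..<r}. f i (x + t *\<^sub>R v) < 0) (at_right 0)"
    using eventually_negative_along_descent_direction[OF deriv nonpos descent]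
    by (simp add: eventually_ball_finite)
  moreover have "eventually (\<lambda>t. t \<in> {0<..<\<delta>}) (at_right 0)"
    using \<open>\<delta> > 0\<close> by (rule eventually_at_right_real)
  ultimately obtain t where "\<forall>i\<in>{..<r}. f i (x + t *\<^sub>R v) < 0" "t \<in> {0<..<\<delta>}"
    using eventually_happens'[OF trivial_limit_at_right_real eventually_conj] by blast
  then show ?thesis using that by auto
qed

lemma open_strictly_feasible_after_shift:
  fixes c :: "nat \<Rightarrow> ('a::real_normed_vector) \<times> ('b::real_normed_vector) \<Rightarrow> real"
  assumes "\<And>i. i < r \<Longrightarrow> continuous_on UNIV (c i)"
  shows "open {y. \<forall>i<r. c i (fst y + w, snd y) < 0}"
proof -
  have "continuous_on UNIV (\<lambda>y. c i (fst y + w, snd y))" if "i < r" for i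
    by (rule continuous_on_compose2[OF assms[OF that]]) (auto intro!: continuous_intros)
  then have "open (\<Inter>i\<in>{..<r}. (\<lambda>y. c i (fst y + w, snd y)) -` {..<0})"
    by (intro open_INT ballI open_vimage) auto
  moreover have "{y. \<forall>i<r. c i (fst y + w, snd y) < 0} =
      (\<Inter>i\<in>{..<r}. (\<lambda>y. c i (fst y + w, snd y)) -` {..<0})"
    by auto
  ultimately show ?thesis by simp
qed

lemma X_nu_meets_cball_near:
  fixes c :: "nat \<Rightarrow> ('a::real_normed_vector) \<times> ('b::real_normed_vector) \<Rightarrow> real"
  assumes C1: "C1_constraints c c' r"
    and feas: "\<forall>i<r. c i x \<le> 0"
    and mfcq: "MFCQ_nu c c' r x"
    and "\<epsilon> > 0"
  obtains U where "open U" "x \<in> U" "\<forall>y\<in>U. \<exists>z\<in>X_nu c r (snd y). norm (z - fst y) \<le> \<epsilon>"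
proof -
  obtain d :: 'a where d: "\<And>i. i < r \<Longrightarrow> c i x = 0 \<Longrightarrow> c' i x (d, 0) < 0"
    using mfcq unfolding MFCQ_nu_def by blast
  have deriv: "\<And>i p. i < r \<Longrightarrow> (c i has_derivative c' i p) (at p)"
    using C1 unfolding C1_constraints_def by blast
  then have cont: "\<And>i. i < r \<Longrightarrow> continuous_on UNIV (c i)"
    by (meson continuous_at_imp_continuous_on has_derivative_continuous)
  have "\<epsilon> / (norm d + 1) > 0"
    using \<open>\<epsilon> > 0\<close> by (simp add: add_nonneg_pos)
  then obtain t where t: "0 < t" "t < \<epsilon> / (norm d + 1)"
    and strict: "\<forall>i<r. c i (x + t *\<^sub>R (d, 0)) < 0"
    using deriv[of _ x] feas[rule_format] d by (rule exists_small_strictly_feasible_step)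
  define U where "U = {y. \<forall>i<r. c i (fst y + t *\<^sub>R d, snd y) < 0}"
  have "norm (t *\<^sub>R d) \<le> \<epsilon>"
  proof -
    have "norm (t *\<^sub>R d) \<le> t * (norm d + 1)" using t(1) by simp
    also have "\<dots> \<le> \<epsilon>" using t(2) by (simp add: pos_less_divide_eq add_nonneg_pos)
    finally show ?thesis .
  qed
  then have "fst y + t *\<^sub>R d \<in> X_nu c r (snd y) \<and> norm ((fst y + t *\<^sub>R d) - fst y) \<le> \<epsilon>"
    if "y \<in> U" for y
    using that unfolding U_def X_nu_def by (simp add: less_imp_le)
  moreover have "open U"
    unfolding U_def using cont by (rule open_strictly_feasible_after_shift)
  moreover have "x \<in> U"
  proof -
    have "x + t *\<^sub>R (d, 0) = (fst x + t *\<^sub>R d, snd x)"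
      by (simp add: prod_eq_iff)
    then show ?thesis using strict unfolding U_def by simp
  qed
  ultimately show ?thesis using that by blast
qed

theorem lemma2p9:
  fixes c :: "nat \<Rightarrow> ('a::euclidean_space) \<times> ('b::euclidean_space) \<Rightarrow> real"
    and c' :: "nat \<Rightarrow> 'a \<times> 'b \<Rightarrow> ('a \<times> 'b) \<Rightarrow>\<^sub>L real"
    and r :: nat and x :: "'a \<times> 'b"
  assumes C1: "C1_constraints c c' r"
    and feas: "\<forall>i<r. c i x \<le> 0"
    and mfcq: "MFCQ_nu c c' r x"
  shows "(\<exists>U. open U \<and> x \<in> U \<and> (\<forall>y\<in>U. X_nu c r (snd y) \<noteq> {}))
    \<and> (\<forall>\<epsilon>>0. \<exists>U. open U \<and> x \<in> U \<and>
          (\<forall>y\<in>U. \<exists>z\<in>X_nu c r (snd y). norm (z - fst y) \<le> \<epsilon>))"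
proof (intro conjI allI impI)
  obtain U where "open U" "x \<in> U"
    and "\<forall>y\<in>U. \<exists>z\<in>X_nu c r (snd y). norm (z - fst y) \<le> 1"
    by (rule X_nu_meets_cball_near[OF C1 feas mfcq zero_less_one])
  then show "\<exists>U. open U \<and> x \<in> U \<and> (\<forall>y\<in>U. X_nu c r (snd y) \<noteq> {})"
    by blast
next
  fix \<epsilon> :: real
  assume "\<epsilon> > 0"
  then obtain U where "open U" "x \<in> U"
    and "\<forall>y\<in>U. \<exists>z\<in>X_nu c r (snd y). norm (z - fst y) \<le> \<epsilon>"
    by (rule X_nu_meets_cball_near[OF C1 feas mfcq])
  then show "\<exists>U. open U \<and> x \<in> U \<and> (\<forall>y\<in>U. \<exists>z\<in>X_nu c r (snd y). norm (z - fst y) \<le> \<epsilon>)"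
    by blast
qed

end
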